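(* Let $\alpha\ge0$, $\beta\ge0$, $\gamma>0$, $T>0$ satisfy $\gamma/2+\beta+T\alpha>1/T$. Then for every $\theta\in(0,2\pi)$ both roots $\lambda\in\mathbb C$ of $$\lambda^2+\gamma\Big(\frac{1-e^{i\theta}}{T}+\lambda\Big)+\beta\lambda(1-e^{i\theta})+\alpha(2-e^{i\theta}-e^{-i\theta})=0$$ have strictly negative real part, while for $\theta=0$ the roots are $0$ and $-\gamma$. Equivalently, with $c=\cos\theta$, $s=\sin\theta$, for all $c\in[-1,1)$ with $s^2=1-c^2$, $$(\beta(1-c)+\gamma)\Big[(\beta(1-c)+\gamma)(1-c)\Big(\frac{\gamma}{T}+2\alpha\Big)+\frac{\beta\gamma}{T}s^2\Big]-\Big(\frac{\gamma}{T}\Big)^2s^2>0.$$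
   Context: This is the characteristic equation of the deterministic linear car-following system $\ddot s_n=\gamma\big(\frac{s_{n+1}-s_n}{T}-\dot s_n\big)+\beta(\dot s_{n+1}-\dot s_n)+\alpha(s_{n+1}-2s_n+s_{n-1})$ on a ring, obtained from the ansatz $s_n=\xi e^{\lambda t}e^{in\theta}$, $\theta=2\pi k/N$. *)

theory Defs
  imports Complex_Main
begin

text \<open>Characteristic polynomial of the linear car-following system on a ring,
  evaluated at lambda, for wave angle theta.\<close>
definition char_poly :: "real \<Rightarrow> real \<Rightarrow> real \<Rightarrow> real \<Rightarrow> real \<Rightarrow> complex \<Rightarrow> complex" where
  "char_poly \<alpha> \<beta> \<gamma> T \<theta> lam =
     lam^2 + of_real \<gamma> * ((1 - cis \<theta>) / of_real T + lam)
     + of_real \<beta> * lam * (1 - cis \<theta>)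
     + of_real \<alpha> * (2 - cis \<theta> - cis (-\<theta>))"

end

theory Submission
  imports Defs
begin

text \<open>Splitting
  \<open>\<lambda> = x + i y\<close> into real and imaginary parts and eliminating \<open>y\<close> gives a quartic in
  \<open>x\<close> with nonnegative coefficients whose constant term is the Hurwitz-type discriminant
  of the last conjunct, so a positive discriminant rules out roots with \<open>x \<ge> 0\<close>.
  With \<open>u = 1 - cos \<theta>\<close> the discriminant is \<open>u\<close> times a quotient which is either manifestly
  positive or, after replacing \<open>\<beta> u + \<gamma>\<close> by \<open>\<gamma>\<close> and \<open>u\<close> by \<open>0\<close>, bounded below by
  \<open>2\<gamma>\<^sup>2/T \<cdot> (\<gamma>/2 + \<beta> + T\<alpha> - 1/T)\<close>.\<close>

lemma complex_quadratic_root_Re_neg: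
  fixes p q z :: complex
  assumes p: "Re p > 0" and q: "Re q \<ge> 0"
    and discr: "(Re p)\<^sup>2 * Re q + Re p * Im p * Im q - (Im q)\<^sup>2 > 0"
    and root: "z\<^sup>2 + p * z + q = 0"
  shows "Re z < 0"
proof (rule ccontr)
  define a b c d x y where parts: "a = Re p" "b = Im p" "c = Re q" "d = Im q" "x = Re z" "y = Im z"
  assume "\<not> Re z < 0"
  then have x: "x \<ge> 0" by (simp add: parts)
  have re: "x\<^sup>2 - y\<^sup>2 + a * x - b * y + c = 0" and im: "2 * x * y + a * y + b * x + d = 0"
    using arg_cong[OF root, of Re] arg_cong[OF root, of Im]
    by (simp_all add: parts power2_eq_square algebra_simps)
  \<comment> \<open>the combination of the two equations that eliminates \<open>y\<close>\<close>
  have "4*x^4 + 8*a*x^3 + (5*a\<^sup>2 + 4*c + b\<^sup>2)*x\<^sup>2 + (a^3 + 4*a*c + a*b\<^sup>2)*x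
          + (a\<^sup>2 * c + a * b * d - d\<^sup>2)
        = (2*x + a)\<^sup>2 * (x\<^sup>2 - y\<^sup>2 + a * x - b * y + c)
          + (y * (2*x + a) - (b*x + d) + b * (2*x + a)) * (2 * x * y + a * y + b * x + d)"
    by (simp add: algebra_simps power2_eq_square power3_eq_cube power4_eq_xxxx)
  also have "\<dots> = 0" using re im by simp
  finally have quartic: "4*x^4 + 8*a*x^3 + (5*a\<^sup>2 + 4*c + b\<^sup>2)*x\<^sup>2 + (a^3 + 4*a*c + a*b\<^sup>2)*x
          + (a\<^sup>2 * c + a * b * d - d\<^sup>2) = 0" .
  have "4*x^4 + 8*a*x^3 + (5*a\<^sup>2 + 4*c + b\<^sup>2)*x\<^sup>2 + (a^3 + 4*a*c + a*b\<^sup>2)*x \<ge> 0"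
    using x p q by (intro add_nonneg_nonneg mult_nonneg_nonneg) (auto simp: parts)
  with quartic discr show False by (simp add: parts)
qed

lemma char_poly_eq_quadratic:
  "char_poly \<alpha> \<beta> \<gamma> T \<theta> lam =
     lam\<^sup>2 + (of_real \<gamma> + of_real \<beta> * (1 - cis \<theta>)) * lam
       + (of_real \<gamma> * (1 - cis \<theta>) / of_real T + of_real \<alpha> * (2 - cis \<theta> - cis (-\<theta>)))"
  by (simp add: char_poly_def algebra_simps)

lemma char_poly_zero_angle: "char_poly \<alpha> \<beta> \<gamma> T 0 lam = lam * (lam + of_real \<gamma>)"
  by (simp add: char_poly_def power2_eq_square algebra_simps)

lemma cos_lt_1_of_0_2pi:
  assumes "0 < \<theta>" "\<theta> < 2 * pi"
  shows "cos \<theta> < 1"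
proof -
  have "sin (\<theta> / 2) > 0" using assms by (intro sin_gt_zero) auto
  then show ?thesis using cos_double_sin[of "\<theta> / 2"] by simp
qed

text \<open>The discriminant at \<open>u = 1 - c\<close>, divided by \<open>u\<close>, written with \<open>B = \<beta> u + \<gamma>\<close> and
  \<open>g = \<gamma>/T\<close>; here \<open>s\<^sup>2 = u (2 - u)\<close>.\<close>

lemma stability_quotient_pos:
  fixes \<alpha> \<beta> \<gamma> g u B :: real
  assumes "\<alpha> \<ge> 0" "\<beta> \<ge> 0" "\<gamma> > 0" "g > 0" "0 < u" "u \<le> 2" "B \<ge> \<gamma>"
    and worst: "\<gamma>\<^sup>2 * (g + 2*\<alpha>) + 2 * g * \<beta> * \<gamma> - 2 * g\<^sup>2 > 0"
  shows "B\<^sup>2 * (g + 2*\<alpha>) + \<beta> * g * B * (2 - u) - g\<^sup>2 * (2 - u) > 0"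
proof (cases "\<beta> * B \<le> g")
  case True
  have "g * u * (\<beta> * B - g) \<le> 0"
    using True assms by (simp add: mult_nonneg_nonpos)
  moreover have "B\<^sup>2 * (g + 2*\<alpha>) \<ge> \<gamma>\<^sup>2 * (g + 2*\<alpha>)"
    using assms by (intro mult_right_mono power_mono) auto
  moreover have "2 * g * \<beta> * B \<ge> 2 * g * \<beta> * \<gamma>"
    using assms by (intro mult_left_mono) auto
  ultimately show ?thesis
    using worst by (simp add: algebra_simps power2_eq_square)
next
  case False
  then have "g * (2 - u) * (\<beta> * B - g) \<ge> 0" using assms by simp
  moreover have "B\<^sup>2 * (g + 2*\<alpha>) > 0" using assms by simp
  ultimately show ?thesis by (simp add: algebra_simps power2_eq_square)
qed

lemma stability_discriminant_pos:
  fixes \<alpha> \<beta> \<gamma> T c s :: real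
  assumes "\<alpha> \<ge> 0" "\<beta> \<ge> 0" "\<gamma> > 0" "T > 0"
    and "\<gamma> / 2 + \<beta> + T * \<alpha> > 1 / T"
    and "-1 \<le> c" "c < 1" and s: "s\<^sup>2 = 1 - c\<^sup>2"
  shows "(\<beta> * (1 - c) + \<gamma>) * ((\<beta> * (1 - c) + \<gamma>) * (1 - c) * (\<gamma> / T + 2 * \<alpha>)
            + \<beta> * \<gamma> / T * s\<^sup>2) - (\<gamma> / T)\<^sup>2 * s\<^sup>2 > 0"
proof -
  define u g B where uB_defs: "u = 1 - c" "g = \<gamma> / T" "B = \<beta> * u + \<gamma>"
  have u: "0 < u" "u \<le> 2" and g: "g > 0" and "B \<ge> \<gamma>"
    using assms by (auto simp: uB_defs)
  have "\<gamma>\<^sup>2 * (g + 2*\<alpha>) + 2 * g * \<beta> * \<gamma> - 2 * g\<^sup>2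
        = 2 * \<gamma>\<^sup>2 / T * (\<gamma> / 2 + \<beta> + T * \<alpha> - 1 / T)"
    using \<open>T > 0\<close> by (simp add: uB_defs field_simps power2_eq_square)
  also have "\<dots> > 0" using assms by simp
  finally have quotient: "B\<^sup>2 * (g + 2*\<alpha>) + \<beta> * g * B * (2 - u) - g\<^sup>2 * (2 - u) > 0"
    using stability_quotient_pos[OF assms(1-3) g u \<open>B \<ge> \<gamma>\<close>] by simp
  have s_u: "s\<^sup>2 = u * (2 - u)" using s by (simp add: uB_defs power2_eq_square algebra_simps)
  have "(\<beta> * (1 - c) + \<gamma>) * ((\<beta> * (1 - c) + \<gamma>) * (1 - c) * (\<gamma> / T + 2 * \<alpha>)
            + \<beta> * \<gamma> / T * s\<^sup>2) - (\<gamma> / T)\<^sup>2 * s\<^sup>2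
      = u * (B\<^sup>2 * (g + 2*\<alpha>) + \<beta> * g * B * (2 - u) - g\<^sup>2 * (2 - u))"
    unfolding s_u using \<open>T > 0\<close> by (simp add: uB_defs field_simps power2_eq_square)
  then show ?thesis using quotient u by simp
qed

lemma char_poly_root_Re_neg:
  fixes \<alpha> \<beta> \<gamma> T :: real
  assumes "\<alpha> \<ge> 0" "\<beta> \<ge> 0" "\<gamma> > 0" "T > 0" "\<gamma> / 2 + \<beta> + T * \<alpha> > 1 / T"
    and "0 < \<theta>" "\<theta> < 2 * pi" and root: "char_poly \<alpha> \<beta> \<gamma> T \<theta> lam = 0"
  shows "Re lam < 0"
proof -
  define p q where pq: "p = of_real \<gamma> + of_real \<beta> * (1 - cis \<theta>)"
    "q = of_real \<gamma> * (1 - cis \<theta>) / of_real T + of_real \<alpha> * (2 - cis \<theta> - cis (-\<theta>))"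
  have p: "Re p = \<beta> * (1 - cos \<theta>) + \<gamma>" "Im p = - \<beta> * sin \<theta>"
    by (simp_all add: pq algebra_simps)
  have q: "Re q = (1 - cos \<theta>) * (\<gamma> / T + 2 * \<alpha>)" "Im q = - \<gamma> * sin \<theta> / T"
    by (simp_all add: pq algebra_simps add_divide_distrib diff_divide_distrib)
  have "cos \<theta> < 1" using cos_lt_1_of_0_2pi[OF assms(6,7)] .
  have "(\<beta> * (1 - cos \<theta>) + \<gamma>) * ((\<beta> * (1 - cos \<theta>) + \<gamma>) * (1 - cos \<theta>) * (\<gamma> / T + 2 * \<alpha>)
          + \<beta> * \<gamma> / T * (sin \<theta>)\<^sup>2) - (\<gamma> / T)\<^sup>2 * (sin \<theta>)\<^sup>2 > 0"
    by (rule stability_discriminant_pos[OF assms(1-5)]) (simp_all add: \<open>cos \<theta> < 1\<close> sin_squared_eq)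
  also have "\<dots> = (Re p)\<^sup>2 * Re q + Re p * Im p * Im q - (Im q)\<^sup>2"
    unfolding p q using \<open>T > 0\<close> by (simp add: field_simps power2_eq_square)
  finally have "(Re p)\<^sup>2 * Re q + Re p * Im p * Im q - (Im q)\<^sup>2 > 0" .
  moreover have "Re p > 0" "Re q \<ge> 0" using assms \<open>cos \<theta> < 1\<close> by (simp_all add: p q add_nonneg_pos)
  moreover have "lam\<^sup>2 + p * lam + q = 0" using root by (simp add: pq char_poly_eq_quadratic)
  ultimately show ?thesis by (intro complex_quadratic_root_Re_neg)
qed

theorem mainTheorem6:
  fixes \<alpha> \<beta> \<gamma> T :: real
  assumes "\<alpha> \<ge> 0" and "\<beta> \<ge> 0" and "\<gamma> > 0" and "T > 0"
    and "\<gamma> / 2 + \<beta> + T * \<alpha> > 1 / T"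
  shows "(\<forall>\<theta> lam. 0 < \<theta> \<and> \<theta> < 2 * pi \<and> char_poly \<alpha> \<beta> \<gamma> T \<theta> lam = 0 \<longrightarrow> Re lam < 0)
    \<and> {lam. char_poly \<alpha> \<beta> \<gamma> T 0 lam = 0} = {0, - complex_of_real \<gamma>}
    \<and> (\<forall>c s. -1 \<le> c \<and> c < 1 \<and> s^2 = 1 - c^2 \<longrightarrow>
         (\<beta> * (1 - c) + \<gamma>) * ((\<beta> * (1 - c) + \<gamma>) * (1 - c) * (\<gamma> / T + 2 * \<alpha>)
            + \<beta> * \<gamma> / T * s^2) - (\<gamma> / T)^2 * s^2 > 0)"
  using char_poly_root_Re_neg[OF assms] stability_discriminant_pos[OF assms]
  by (auto simp: char_poly_zero_angle add_eq_0_iff)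

end
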